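(* Let $K$ be a totally real number field of degree $n$ and let $A\subseteq\mathbb{R}^n$ be an integer plane with integer distance $\mathrm{ID}(A)=k>0$. Then there exists $\delta\in\mathcal{O}_K^\vee$ such that $A$ is contained in the hyperplane $\{x\in\mathbb{R}^n:\sum_{i=1}^n\tau_i(\delta)x_i=k\}$.
   Context: $\tau_1,\dots,\tau_n$ are the real embeddings of $K$; the Minkowski embedding is $\iota_M:K\to\mathbb{R}^n$, $\alpha\mapsto(\tau_1(\alpha),\dots,\tau_n(\alpha))$, and $\Lambda=\iota_M(\mathcal{O}_K)$ is a lattice of rank $n$. The codifferent is $\mathcal{O}_K^\vee=\{\delta\in K:\operatorname{Tr}_{K/\mathbb{Q}}(\delta\alpha)\in\mathbb{Z}\ \forall\alpha\in\mathcal{O}_K\}$. An integer plane is an affine subspace $A\subseteq\mathbb{R}^n$ such that the set $A\cap\Lambda$ spans (affinely) a lattice of rank equal to $\dim A$. For an integer plane $A$ not containing the origin, its integer distance $\mathrm{ID}(A)$ is the index of the subgroup generated by $A\cap\Lambda$ in the lattice $\Lambda\cap\operatorname{Span}_{\mathbb{R}}(A)$ (and $\mathrm{ID}(A)=0$ if $A$ contains the origin). *)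

theory Defs
  imports "HOL-Analysis.Analysis" "HOL-Computational_Algebra.Polynomial"
begin

definition field_embedding :: "('k::field \<Rightarrow> 'b::field) \<Rightarrow> bool" where
  "field_embedding \<sigma> \<longleftrightarrow>
     (\<forall>x y. \<sigma> (x + y) = \<sigma> x + \<sigma> y) \<and> (\<forall>x y. \<sigma> (x * y) = \<sigma> x * \<sigma> y) \<and> \<sigma> 1 = 1"

text \<open>The field 'k (char 0) has degree CARD('n) over Q: it has a Q-basis indexed by 'n.\<close>
definition has_degree_basis :: "('n::finite \<Rightarrow> 'k::field_char_0) \<Rightarrow> bool" where
  "has_degree_basis b \<longleftrightarrow>
     (\<forall>x. \<exists>!c::'n \<Rightarrow> rat. x = (\<Sum>i\<in>UNIV. of_rat (c i) * b i))"

definition number_field_degree :: "'k::field_char_0 itself \<Rightarrow> 'n::finite itself \<Rightarrow> bool" where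
  "number_field_degree _ _ \<longleftrightarrow> (\<exists>b::'n \<Rightarrow> 'k. has_degree_basis b)"

definition totally_real :: "'k::field itself \<Rightarrow> bool" where
  "totally_real _ \<longleftrightarrow>
     (\<forall>\<sigma>::'k \<Rightarrow> complex. field_embedding \<sigma> \<longrightarrow> (\<forall>x. \<sigma> x \<in> \<real>))"

definition real_embeddings_enum :: "('n \<Rightarrow> 'k::field \<Rightarrow> real) \<Rightarrow> bool" where
  "real_embeddings_enum \<tau> \<longleftrightarrow>
     inj \<tau> \<and> (\<forall>i. field_embedding (\<tau> i)) \<and>
     (\<forall>\<sigma>::'k \<Rightarrow> real. field_embedding \<sigma> \<longrightarrow> (\<exists>i. \<sigma> = \<tau> i))"

definition ring_of_integers :: "'k::field set" where
  "ring_of_integers = {\<alpha>. algebraic_int \<alpha>}"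

definition minkowski :: "('n::finite \<Rightarrow> 'k \<Rightarrow> real) \<Rightarrow> 'k \<Rightarrow> real ^ 'n" where
  "minkowski \<tau> \<alpha> = (\<chi> i. \<tau> i \<alpha>)"

definition minkowski_lattice :: "('n::finite \<Rightarrow> 'k::field \<Rightarrow> real) \<Rightarrow> (real ^ 'n) set" where
  "minkowski_lattice \<tau> = minkowski \<tau> ` ring_of_integers"

definition trace :: "('n::finite \<Rightarrow> 'k \<Rightarrow> real) \<Rightarrow> 'k \<Rightarrow> real" where
  "trace \<tau> x = (\<Sum>i\<in>UNIV. \<tau> i x)"

definition codifferent :: "('n::finite \<Rightarrow> 'k::field \<Rightarrow> real) \<Rightarrow> 'k set" where
  "codifferent \<tau> = {\<delta>. \<forall>\<alpha>\<in>ring_of_integers. trace \<tau> (\<delta> * \<alpha>) \<in> \<int>}"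

definition zspan :: "('a::real_vector) set \<Rightarrow> 'a set" where
  "zspan S = {x. \<exists>T c. finite T \<and> T \<subseteq> S \<and> x = (\<Sum>v\<in>T. real_of_int (c v) *\<^sub>R v)}"

definition integer_plane :: "(real ^ 'n::finite) set \<Rightarrow> (real ^ 'n) set \<Rightarrow> bool" where
  "integer_plane \<Lambda> A \<longleftrightarrow> affine A \<and> aff_dim (A \<inter> \<Lambda>) = aff_dim A"

definition int_distance :: "(real ^ 'n::finite) set \<Rightarrow> (real ^ 'n) set \<Rightarrow> nat" where
  "int_distance \<Lambda> A =
     (if 0 \<in> A then 0
      else card ((\<lambda>x. (\<lambda>g. x + g) ` zspan (A \<inter> \<Lambda>)) ` (\<Lambda> \<inter> span A)))"

end

theory Submission
  imports Defs "Jordan_Normal_Form.Char_Poly"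
begin

text \<open>
  Let \<open>P = A \<inter> \<Lambda>\<close> and \<open>L = \<Lambda> \<inter> span A\<close>. Since \<open>0 \<notin> A\<close>, some linear form that is
  rational on \<open>\<rat>\<Lambda>\<close> equals \<open>k\<close> on \<open>A\<close>. It takes values in \<open>k\<int>\<close> on the group
  generated by \<open>P\<close>, which has index \<open>k\<close> in \<open>L\<close>; hence it is integral on \<open>L\<close>. Because
  \<open>L\<close> is cut out of \<open>\<Lambda>\<close> by a subspace, the form extends to an integral form on all of
  \<open>\<Lambda>\<close>, one new direction at a time, using that subgroups of \<open>\<int>\<close> are cyclic. Finally
  the trace form identifies integral forms on \<open>\<Lambda>\<close> with the codifferent:
  \<open>Tr(\<delta>\<alpha>) = \<Sum>\<^sub>i \<tau>\<^sub>i \<delta> \<tau>\<^sub>i \<alpha>\<close>, and this trace form is rational and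
  nondegenerate because the \<open>\<tau>\<^sub>i\<close> are \<open>n\<close> distinct embeddings (Dedekind's independence of
  characters).
\<close>

section \<open>Algebraic integers form a ring\<close>

lemma algebraic_int_of_integral_eigenvector:
  fixes x :: "'a::field_char_0" and v :: "'i \<Rightarrow> 'a" and c :: "'i \<Rightarrow> 'i \<Rightarrow> int"
  assumes fin: "finite I" and i0: "i0 \<in> I" "v i0 \<noteq> 0"
    and eigen: "\<And>i. i \<in> I \<Longrightarrow> x * v i = (\<Sum>j\<in>I. of_int (c i j) * v j)"
  shows "algebraic_int x"
proof -
  define m where "m = card I"
  obtain h where h: "bij_betw h {0..<m} I" using ex_bij_betw_nat_finite[OF fin] m_def by blast
  define C :: "int mat" where "C = Matrix.mat m m (\<lambda>(r, s). c (h r) (h s))"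
  define w :: "'a Matrix.vec" where "w = Matrix.vec m (\<lambda>r. v (h r))"
  have C: "C \<in> carrier_mat m m" by (simp add: C_def)
  let ?C = "of_int_hom.mat_hom C :: 'a mat"
  have cA: "?C \<in> carrier_mat m m" using C by simp
  have "?C *\<^sub>v w = x \<cdot>\<^sub>v w"
  proof (rule eq_vecI)
    fix r assume "r < dim_vec (x \<cdot>\<^sub>v w)"
    hence r: "r < m" by (simp add: w_def)
    have "(?C *\<^sub>v w) $ r = (\<Sum>s = 0..<m. of_int (c (h r) (h s)) * v (h s))"
      using r by (simp add: mult_mat_vec_def scalar_prod_def C_def w_def)
    also have "\<dots> = (\<Sum>j\<in>I. of_int (c (h r) j) * v j)"
      using sum.reindex_bij_betw[OF h, of "\<lambda>j. of_int (c (h r) j) * v j"] by simp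
    also have "\<dots> = x * v (h r)" using eigen[of "h r"] h r by (auto simp: bij_betw_def)
    finally show "(?C *\<^sub>v w) $ r = (x \<cdot>\<^sub>v w) $ r" using r by (simp add: w_def)
  qed (simp add: w_def C_def)
  moreover have "w \<noteq> 0\<^sub>v m"
  proof
    assume w0: "w = 0\<^sub>v m"
    obtain r where r: "r < m" "h r = i0" using h i0 by (force simp: bij_betw_def)
    have "w $ r = 0" using w0 r by simp
    thus False using r i0 by (simp add: w_def)
  qed
  ultimately have "eigenvector ?C w x"
    using C unfolding eigenvector_def by (simp add: w_def)
  hence "eigenvalue ?C x" unfolding eigenvalue_def by blast
  hence "poly (char_poly ?C) x = 0" using eigenvalue_root_char_poly[OF cA] by simp
  hence "poly (of_int_poly (char_poly C)) x = 0" by (metis of_int_hom.char_poly_hom[OF C])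
  moreover have "monic (char_poly C)" using degree_monic_char_poly[OF C] by simp
  ultimately show ?thesis unfolding algebraic_int_altdef_ipoly by blast
qed

lemma algebraic_int_power_reduction:
  fixes x :: "'a::field_char_0"
  assumes "algebraic_int x"
  obtains d :: nat and a :: "nat \<Rightarrow> int" where "d > 0" "x ^ d = (\<Sum>i<d. of_int (a i) * x ^ i)"
proof -
  obtain p where p: "poly (of_int_poly p) x = 0" "monic p"
    using assms unfolding algebraic_int_altdef_ipoly by blast
  define d where "d = degree p"
  have "poly (of_int_poly p) x = (\<Sum>i\<le>degree (of_int_poly p :: 'a poly). coeff (of_int_poly p) i * x ^ i)"
    by (rule poly_altdef)
  also have "\<dots> = (\<Sum>i\<le>d. of_int (coeff p i) * x ^ i)"
    by (simp add: d_def)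
  also have "\<dots> = (\<Sum>i<d. of_int (coeff p i) * x ^ i) + of_int (coeff p d) * x ^ d"
    by (simp only: lessThan_Suc_atMost[symmetric] sum.lessThan_Suc)
  also have "\<dots> = (\<Sum>i<d. of_int (coeff p i) * x ^ i) + x ^ d"
    using p(2) by (simp add: d_def)
  finally have eq0: "0 = (\<Sum>i<d. of_int (coeff p i) * x ^ i) + x ^ d" using p(1) by simp
  have "d > 0"
  proof (rule ccontr)
    assume "\<not> d > 0"
    hence "d = 0" by simp
    thus False using eq0 by simp
  qed
  from eq0 have "x ^ d = - (\<Sum>i<d. of_int (coeff p i) * x ^ i)"
    by (simp add: add_eq_0_iff)
  also have "\<dots> = (\<Sum>i<d. of_int (- coeff p i) * x ^ i)"
    by (simp add: sum_negf[symmetric])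
  finally have "x ^ d = (\<Sum>i<d. of_int (- coeff p i) * x ^ i)" .
  show ?thesis by (rule that[OF \<open>d > 0\<close>]) fact
qed

definition int_combinations :: "'i set \<Rightarrow> ('i \<Rightarrow> 'a::comm_ring_1) \<Rightarrow> 'a set" where
  "int_combinations I v = {u. \<exists>c::'i \<Rightarrow> int. u = (\<Sum>j\<in>I. of_int (c j) * v j)}"

lemma int_combinations_zero: "0 \<in> int_combinations I v"
  unfolding int_combinations_def by (intro CollectI exI[of _ "\<lambda>_. 0"]) simp

lemma int_combinations_add:
  assumes "u \<in> int_combinations I v" "u' \<in> int_combinations I v"
  shows "u + u' \<in> int_combinations I v"
proof -
  obtain c c' where "u = (\<Sum>j\<in>I. of_int (c j) * v j)" "u' = (\<Sum>j\<in>I. of_int (c' j) * v j)"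
    using assms unfolding int_combinations_def by blast
  hence "u + u' = (\<Sum>j\<in>I. of_int (c j + c' j) * v j)"
    by (simp add: sum.distrib distrib_right)
  thus ?thesis unfolding int_combinations_def by (intro CollectI exI)
qed

lemma int_combinations_gen:
  assumes "finite I" "i \<in> I"
  shows "v i \<in> int_combinations I v"
proof -
  have "(\<Sum>j\<in>I. of_int (if j = i then 1 else 0) * v j) = (\<Sum>j\<in>I. if j = i then v j else 0)"
    by (rule sum.cong) auto
  hence "v i = (\<Sum>j\<in>I. of_int (if j = i then 1 else 0) * v j)" using assms by simp
  thus ?thesis unfolding int_combinations_def by (intro CollectI exI)
qed

lemma int_combinations_of_int_mult:
  assumes "u \<in> int_combinations I v"
  shows "of_int m * u \<in> int_combinations I v"
proof -
  obtain c where "u = (\<Sum>j\<in>I. of_int (c j) * v j)"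
    using assms unfolding int_combinations_def by blast
  hence "of_int m * u = (\<Sum>j\<in>I. of_int (m * c j) * v j)"
    by (simp add: sum_distrib_left mult.assoc)
  thus ?thesis unfolding int_combinations_def by (intro CollectI exI)
qed

lemma int_combinations_sum:
  "(\<And>s. s \<in> S \<Longrightarrow> f s \<in> int_combinations I v) \<Longrightarrow> (\<Sum>s\<in>S. f s) \<in> int_combinations I v"
  by (induction S rule: infinite_finite_induct) (auto intro: int_combinations_zero int_combinations_add)

lemma int_combinations_mult_stable:
  assumes "\<And>i. i \<in> I \<Longrightarrow> x * v i \<in> int_combinations I v"
    and "u \<in> int_combinations I v"
  shows "x * u \<in> int_combinations I v"
proof -
  obtain c where "u = (\<Sum>j\<in>I. of_int (c j) * v j)"
    using assms(2) unfolding int_combinations_def by blast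
  hence "x * u = (\<Sum>j\<in>I. of_int (c j) * (x * v j))"
    by (simp add: sum_distrib_left mult.left_commute)
  also have "\<dots> \<in> int_combinations I v"
    using assms by (intro int_combinations_sum int_combinations_of_int_mult) auto
  finally show ?thesis .
qed

lemma algebraic_int_if_mult_stable:
  fixes x :: "'a::field_char_0"
  assumes "finite I" "i0 \<in> I" "v i0 \<noteq> 0" "\<And>i. i \<in> I \<Longrightarrow> x * v i \<in> int_combinations I v"
  shows "algebraic_int x"
proof -
  have "\<forall>i\<in>I. \<exists>c. x * v i = (\<Sum>j\<in>I. of_int (c j) * v j)"
    using assms(4) unfolding int_combinations_def by blast
  then obtain c where "\<And>i. i \<in> I \<Longrightarrow> x * v i = (\<Sum>j\<in>I. of_int (c i j) * v j)"
    by metis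
  thus ?thesis by (rule algebraic_int_of_integral_eigenvector[of I i0 v x c, OF assms(1-3)])
qed

lemma int_combinations_power_step:
  fixes x :: "'a::comm_ring_1"
  assumes x: "x ^ d = (\<Sum>i<d. of_int (a i) * x ^ i)" and "i < d"
    and gen: "\<And>i'. i' < d \<Longrightarrow> x ^ i' * z \<in> int_combinations I v"
  shows "x * (x ^ i * z) \<in> int_combinations I v"
proof (cases "Suc i < d")
  case True
  thus ?thesis using gen[OF True] by (simp add: mult.assoc)
next
  case False
  hence "Suc i = d" using \<open>i < d\<close> by simp
  hence "x * (x ^ i * z) = x ^ d * z" by (auto simp: mult.assoc)
  also have "\<dots> = (\<Sum>i'<d. of_int (a i') * (x ^ i' * z))"
    by (simp add: x sum_distrib_right mult.assoc)
  also have "\<dots> \<in> int_combinations I v"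
    by (intro int_combinations_sum int_combinations_of_int_mult gen) simp
  finally show ?thesis .
qed

lemma algebraic_int_pair_stable_module:
  fixes x y :: "'a::field_char_0"
  assumes "algebraic_int x" "algebraic_int y"
  obtains I and v :: "nat \<times> nat \<Rightarrow> 'a"
  where "finite I" "(0, 0) \<in> I" "v (0, 0) = 1"
    "\<And>i. i \<in> I \<Longrightarrow> x * v i \<in> int_combinations I v"
    "\<And>i. i \<in> I \<Longrightarrow> y * v i \<in> int_combinations I v"
proof -
  obtain d a where d: "d > 0" "x ^ d = (\<Sum>i<d. of_int (a i) * x ^ i)"
    using algebraic_int_power_reduction[OF assms(1)] by blast
  obtain e b where e: "e > 0" "y ^ e = (\<Sum>j<e. of_int (b j) * y ^ j)"
    using algebraic_int_power_reduction[OF assms(2)] by blast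
  define I where "I = {..<d} \<times> {..<e}"
  define v where "v = (\<lambda>(i, j). x ^ i * y ^ j)"
  have fin: "finite I" by (simp add: I_def)
  have gen: "x ^ i * y ^ j \<in> int_combinations I v" if "i < d" "j < e" for i j
    using int_combinations_gen[OF fin, of "(i, j)" v] that by (simp add: I_def v_def)
  have "x * v k \<in> int_combinations I v" "y * v k \<in> int_combinations I v" if "k \<in> I" for k
  proof -
    obtain i j where k: "k = (i, j)" "i < d" "j < e" using \<open>k \<in> I\<close> by (auto simp: I_def)
    have "x * (x ^ i * y ^ j) \<in> int_combinations I v"
      by (rule int_combinations_power_step[OF d(2) k(2)]) (rule gen[OF _ k(3)])
    thus "x * v k \<in> int_combinations I v" by (simp add: k(1) v_def)
    have "y * (y ^ j * x ^ i) \<in> int_combinations I v"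
      by (rule int_combinations_power_step[OF e(2) k(3)]) (simp add: gen k(2) mult.commute)
    thus "y * v k \<in> int_combinations I v" by (simp add: k(1) v_def mult.commute)
  qed
  moreover have "(0, 0) \<in> I" using d(1) e(1) by (simp add: I_def)
  ultimately show ?thesis using that[of I v] fin by (simp add: v_def)
qed

lemma algebraic_int_add [intro]:
  fixes x y :: "'a::field_char_0"
  assumes "algebraic_int x" "algebraic_int y"
  shows "algebraic_int (x + y)"
proof -
  obtain I :: "(nat \<times> nat) set" and v where I: "finite I" "(0, 0) \<in> I" "v (0, 0) = 1"
    and x: "\<And>i. i \<in> I \<Longrightarrow> x * v i \<in> int_combinations I v"
    and y: "\<And>i. i \<in> I \<Longrightarrow> y * v i \<in> int_combinations I v"
    using algebraic_int_pair_stable_module[OF assms] by blast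
  show ?thesis
  proof (rule algebraic_int_if_mult_stable[OF I(1,2)])
    fix i assume "i \<in> I"
    thus "(x + y) * v i \<in> int_combinations I v"
      using x y by (simp add: distrib_right int_combinations_add)
  qed (simp add: I(3))
qed

lemma algebraic_int_mult [intro]:
  fixes x y :: "'a::field_char_0"
  assumes "algebraic_int x" "algebraic_int y"
  shows "algebraic_int (x * y)"
proof -
  obtain I :: "(nat \<times> nat) set" and v where I: "finite I" "(0, 0) \<in> I" "v (0, 0) = 1"
    and x: "\<And>i. i \<in> I \<Longrightarrow> x * v i \<in> int_combinations I v"
    and y: "\<And>i. i \<in> I \<Longrightarrow> y * v i \<in> int_combinations I v"
    using algebraic_int_pair_stable_module[OF assms] by blast
  show ?thesis
  proof (rule algebraic_int_if_mult_stable[OF I(1,2)])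
    fix i assume "i \<in> I"
    thus "(x * y) * v i \<in> int_combinations I v"
      using int_combinations_mult_stable[OF x y] by (simp add: mult.assoc)
  qed (simp add: I(3))
qed

lemma algebraic_int_sum [intro]:
  fixes f :: "'i \<Rightarrow> 'a::field_char_0"
  shows "(\<And>i. i \<in> S \<Longrightarrow> algebraic_int (f i)) \<Longrightarrow> algebraic_int (\<Sum>i\<in>S. f i)"
  by (induction S rule: infinite_finite_induct) auto

lemma field_embedding_imp_field_hom:
  assumes "field_embedding \<sigma>"
  shows "field_hom \<sigma>"
proof -
  have add: "\<And>x y. \<sigma> (x + y) = \<sigma> x + \<sigma> y" and mult: "\<And>x y. \<sigma> (x * y) = \<sigma> x * \<sigma> y"
    and one: "\<sigma> 1 = 1" using assms unfolding field_embedding_def by auto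
  have "\<sigma> 0 = 0" using add[of 0 0] by (metis add_cancel_right_right)
  thus ?thesis by unfold_locales (simp_all add: add mult one)
qed

lemma field_embedding_of_rat:
  assumes "field_embedding (\<sigma> :: 'a::field_char_0 \<Rightarrow> 'b::field_char_0)"
  shows "\<sigma> (of_rat q) = of_rat q"
proof -
  interpret field_hom \<sigma> by (rule field_embedding_imp_field_hom[OF assms])
  obtain a d where "quotient_of q = (a, d)" by (cases "quotient_of q")
  hence "q = of_int a / of_int d" by (rule quotient_of_div)
  thus ?thesis by (simp add: of_rat_divide hom_distribs)
qed

lemma algebraic_int_field_embedding:
  assumes "field_embedding (\<sigma> :: 'a::field_char_0 \<Rightarrow> 'b::field_char_0)" "algebraic_int x"
  shows "algebraic_int (\<sigma> x)"
proof -
  interpret field_hom \<sigma> by (rule field_embedding_imp_field_hom[OF assms(1)])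
  obtain p where p: "poly (of_int_poly p) x = 0" "monic p"
    using assms(2) unfolding algebraic_int_altdef_ipoly by blast
  have "poly (of_int_poly p) (\<sigma> x) = \<sigma> (poly (of_int_poly p) x)"
    by (simp add: poly_altdef hom_distribs of_int_hom.degree_map_poly_hom)
  thus ?thesis using p unfolding algebraic_int_altdef_ipoly by auto
qed

no_notation Matrix.vec_index (infixl "$" 100)

section \<open>Integral linear forms on subgroups of \<open>\<rat>\<^sup>n\<close>\<close>

definition add_subgroup :: "'a::ab_group_add set \<Rightarrow> bool" where
  "add_subgroup H \<longleftrightarrow> 0 \<in> H \<and> (\<forall>a\<in>H. \<forall>b\<in>H. a + b \<in> H) \<and> (\<forall>a\<in>H. - a \<in> H)"

lemma add_subgroupI:
  assumes "0 \<in> H" "\<And>a b. a \<in> H \<Longrightarrow> b \<in> H \<Longrightarrow> a + b \<in> H" "\<And>a. a \<in> H \<Longrightarrow> - a \<in> H"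
  shows "add_subgroup H"
  using assms unfolding add_subgroup_def by blast

lemma add_subgroup_zero: "add_subgroup H \<Longrightarrow> 0 \<in> H"
  and add_subgroup_add: "add_subgroup H \<Longrightarrow> a \<in> H \<Longrightarrow> b \<in> H \<Longrightarrow> a + b \<in> H"
  and add_subgroup_neg: "add_subgroup H \<Longrightarrow> a \<in> H \<Longrightarrow> - a \<in> H"
  unfolding add_subgroup_def by blast+

lemma add_subgroup_diff: "add_subgroup H \<Longrightarrow> a \<in> H \<Longrightarrow> b \<in> H \<Longrightarrow> a - b \<in> H"
  using add_subgroup_add[of H a "- b"] add_subgroup_neg[of H b] by simp

lemma add_subgroup_sum:
  "add_subgroup H \<Longrightarrow> (\<And>i. i \<in> I \<Longrightarrow> f i \<in> H) \<Longrightarrow> (\<Sum>i\<in>I. f i) \<in> H"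
  by (induction I rule: infinite_finite_induct) (auto intro: add_subgroup_zero add_subgroup_add)

lemma add_subgroup_Int:
  "add_subgroup G \<Longrightarrow> add_subgroup H \<Longrightarrow> add_subgroup (G \<inter> H)"
  unfolding add_subgroup_def by blast

lemma (in Modules.module) add_subgroup_scale_of_int:
  assumes "add_subgroup H" "x \<in> H"
  shows "scale (of_int z) x \<in> H"
proof -
  have nat: "scale (of_nat m) x \<in> H" for m
    by (induction m) (simp_all add: assms add_subgroup_zero add_subgroup_add scale_left_distrib)
  show ?thesis
  proof (cases "z \<ge> 0")
    case True
    thus ?thesis using nat[of "nat z"] by (metis of_int_of_nat_eq int_nat_eq)
  next
    case False
    hence "(of_int z :: 'a) = - of_nat (nat (- z))" by simp
    hence "scale (of_int z) x = - scale (of_nat (nat (- z))) x" by simp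
    thus ?thesis using add_subgroup_neg[OF assms(1) nat] by simp
  qed
qed

lemma vec_add_subgroup_of_int_smult:
  "add_subgroup G \<Longrightarrow> x \<in> G \<Longrightarrow> of_int z *s (x :: 'a::field ^ 'n) \<in> G"
  by (rule vec.add_subgroup_scale_of_int)

lemma real_add_subgroup_of_int_scaleR:
  "add_subgroup L \<Longrightarrow> x \<in> L \<Longrightarrow> of_int z *\<^sub>R (x :: 'a::real_vector) \<in> L"
  by (rule real_vector.add_subgroup_scale_of_int)

lemma int_add_subgroup_principal:
  fixes H :: "int set"
  assumes H: "add_subgroup H" and N: "N \<in> H" "N \<noteq> 0"
  obtains g where "g > 0" "g \<in> H" "\<And>h. h \<in> H \<Longrightarrow> g dvd h"
proof -
  interpret Modules.module "(*) :: int \<Rightarrow> int \<Rightarrow> int" by unfold_locales (simp_all add: algebra_simps)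
  let ?P = "\<lambda>m::nat. m > 0 \<and> int m \<in> H"
  have "?P (nat \<bar>N\<bar>)"
    using N add_subgroup_neg[OF H N(1)] by (cases "N > 0") simp_all
  hence Pm: "?P (LEAST m. ?P m)" by (rule LeastI)
  define g where "g = int (LEAST m. ?P m)"
  have "g dvd h" if h: "h \<in> H" for h
  proof -
    have "h mod g = h - (h div g) * g" by (simp add: minus_div_mult_eq_mod)
    also have "\<dots> \<in> H"
      using add_subgroup_scale_of_int[OF H, of g "h div g"] Pm h H
      by (intro add_subgroup_diff) (auto simp: g_def mult.commute)
    finally have "h mod g \<in> H" .
    moreover have "0 \<le> h mod g" "h mod g < g" using Pm by (simp_all add: g_def)
    ultimately have "\<not> ?P (nat (h mod g))"
      using not_less_Least[of "nat (h mod g)" ?P] by (auto simp: g_def)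
    hence "h mod g = 0" using \<open>h mod g \<in> H\<close> \<open>0 \<le> h mod g\<close> by auto
    thus ?thesis by (simp add: mod_eq_0_iff_dvd)
  qed
  thus ?thesis using that[of g] Pm by (simp add: g_def)
qed

lemma rat_common_denominator:
  fixes S :: "rat set"
  assumes "finite S"
  obtains N :: int where "N > 0" "\<And>q. q \<in> S \<Longrightarrow> of_int N * q \<in> \<int>"
  using assms
proof (induction S arbitrary: thesis rule: finite_induct)
  case empty
  show ?case by (rule empty.prems[of 1]) simp_all
next
  case (insert q S)
  obtain N where N: "N > 0" "\<And>q. q \<in> S \<Longrightarrow> of_int N * q \<in> \<int>"
    using insert.IH by blast
  obtain a d where ad: "quotient_of q = (a, d)" by (cases "quotient_of q")
  have d: "d > 0" using quotient_of_denom_pos[OF ad] .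
  have dq: "of_int d * q = of_int a" using d quotient_of_div[OF ad] by simp
  have "of_int (d * N) * q' \<in> \<int>" if "q' \<in> insert q S" for q'
  proof (cases "q' = q")
    case True
    have "of_int (d * N) * q' = of_int N * (of_int d * q)" using True by (simp add: mult_ac)
    also have "\<dots> = of_int (N * a)" by (simp add: dq)
    finally show ?thesis by (simp only: Ints_of_int)
  next
    case False
    hence "of_int N * q' \<in> \<int>" using N that by simp
    moreover have "of_int (d * N) * q' = of_int d * (of_int N * q')" by (simp add: mult_ac)
    ultimately show ?thesis by (metis Ints_mult Ints_of_int)
  qed
  thus ?case using d N by (intro insert.prems[of "d * N"]) simp_all
qed

lemma of_rat_in_Ints_iff: "(of_rat q :: 'a::field_char_0) \<in> \<int> \<longleftrightarrow> q \<in> \<int>"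
proof
  assume "(of_rat q :: 'a) \<in> \<int>"
  then obtain m where "(of_rat q :: 'a) = of_int m" by (auto elim: Ints_cases)
  hence "q = of_int m" by (metis of_rat_eq_iff of_rat_of_int_eq)
  thus "q \<in> \<int>" by simp
qed (auto elim: Ints_cases)

definition qdot :: "rat ^ 'n \<Rightarrow> rat ^ 'n \<Rightarrow> rat" where
  "qdot w x = (\<Sum>j\<in>UNIV. w $ j * x $ j)"

lemma qdot_add_right [simp]: "qdot w (x + y) = qdot w x + qdot w y"
  and qdot_diff_right [simp]: "qdot w (x - y) = qdot w x - qdot w y"
  and qdot_neg_right [simp]: "qdot w (- x) = - qdot w x"
  and qdot_zero_right [simp]: "qdot w 0 = 0"
  and qdot_smult_right [simp]: "qdot w (c *s x) = c * qdot w x"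
  and qdot_add_left [simp]: "qdot (w + v) x = qdot w x + qdot v x"
  and qdot_diff_left [simp]: "qdot (w - v) x = qdot w x - qdot v x"
  and qdot_smult_left [simp]: "qdot (c *s w) x = c * qdot w x"
  by (simp_all add: qdot_def algebra_simps sum.distrib sum_subtractf sum_negf sum_distrib_left)

lemma qdot_sum_right [simp]: "qdot w (\<Sum>i\<in>S. f i) = (\<Sum>i\<in>S. qdot w (f i))"
  by (induction S rule: infinite_finite_induct) simp_all

lemma qdot_eq_0_on_span:
  assumes "\<And>b. b \<in> B \<Longrightarrow> qdot w b = 0" "x \<in> vec.span B"
  shows "qdot w x = 0"
  using assms(2) by (induction rule: vec.span_induct_alt) (simp_all add: assms(1))

lemma qdot_interpolate:
  fixes B :: "(rat ^ 'n) set"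
  assumes "vec.independent B"
  obtains w where "\<And>b. b \<in> B \<Longrightarrow> qdot w b = g b"
proof -
  fix k0 :: 'n
  define f where "f = vec.construct B (\<lambda>b. g b *s axis k0 (1::rat))"
  have lf: "Vector_Spaces.linear (*s) (*s) f" unfolding f_def by (rule vec.linear_construct[OF assms])
  define w where "w = (\<chi> j. matrix f $ k0 $ j)"
  have "qdot w b = g b" if b: "b \<in> B" for b
  proof -
    have "qdot w b = (matrix f *v b) $ k0"
      by (simp add: qdot_def w_def matrix_vector_mult_def)
    also have "\<dots> = f b $ k0" by (simp add: matrix_works[OF lf])
    also have "f b = g b *s axis k0 1" unfolding f_def by (rule vec.construct_basis[OF assms b])
    finally show ?thesis by (simp add: axis_def)
  qed
  thus ?thesis using that by blast
qed

lemma qdot_separating: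
  fixes T :: "(rat ^ 'n) set"
  assumes "e \<notin> vec.span T"
  obtains \<phi> where "qdot \<phi> e = 1" "\<And>u. u \<in> vec.span T \<Longrightarrow> qdot \<phi> u = 0"
proof -
  obtain B where B: "B \<subseteq> T" "vec.independent B" "T \<subseteq> vec.span B"
    using vec.maximal_independent_subset[of T] by blast
  have "vec.span B = vec.span T"
    using B by (metis vec.span_mono vec.span_span subset_antisym)
  hence "e \<notin> vec.span B" using assms by simp
  hence "vec.independent (insert e B)" "e \<notin> B"
    using B(2) vec.span_base[of e B] by (auto simp: vec.independent_insert)
  then obtain \<phi> where \<phi>: "\<And>b. b \<in> insert e B \<Longrightarrow> qdot \<phi> b = (if b = e then 1 else 0)"
    using qdot_interpolate[of "insert e B" "\<lambda>b. if b = e then 1 else 0"] by blast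
  have "qdot \<phi> b = 0" if "b \<in> B" for b
    using \<phi>[of b] that \<open>e \<notin> B\<close> by auto
  hence "qdot \<phi> u = 0" if "u \<in> vec.span T" for u
    using qdot_eq_0_on_span that \<open>vec.span B = vec.span T\<close> by blast
  thus ?thesis using that[of \<phi>] \<phi>[of e] by simp
qed

lemma qdot_bounded_denominator:
  assumes "D \<noteq> 0" "\<And>c j. c \<in> G \<Longrightarrow> of_int D * c $ j \<in> \<int>"
  obtains N :: int where "N \<noteq> 0" "\<And>l. l \<in> G \<Longrightarrow> of_int N * qdot \<phi> l \<in> \<int>"
proof -
  obtain Q where Q: "Q > 0" "\<And>q. q \<in> range (($) \<phi>) \<Longrightarrow> of_int Q * q \<in> \<int>"
    using rat_common_denominator[of "range (($) \<phi>)"] by auto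
  have int: "of_int (D * Q) * qdot \<phi> l \<in> \<int>" if "l \<in> G" for l
  proof -
    have "of_int (D * Q) * qdot \<phi> l = (\<Sum>j\<in>UNIV. (of_int Q * \<phi> $ j) * (of_int D * l $ j))"
      by (simp add: qdot_def sum_distrib_left mult_ac)
    also have "\<dots> \<in> \<int>" using Q(2) assms(2)[OF that] by (intro Ints_sum, rule Ints_mult) auto
    finally show ?thesis .
  qed
  show ?thesis using that[of "D * Q", OF _ int] assms(1) Q(1) by simp
qed

lemma qdot_image_cyclic:
  fixes G :: "(rat ^ 'n) set"
  assumes G: "add_subgroup G"
    and N: "N \<noteq> 0" "\<And>l. l \<in> G \<Longrightarrow> of_int N * qdot \<phi> l \<in> \<int>"
    and e: "e \<in> G" "qdot \<phi> e \<noteq> 0"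
  obtains l0 where "l0 \<in> G" "qdot \<phi> l0 \<noteq> 0"
    "\<And>l. l \<in> G \<Longrightarrow> \<exists>z::int. qdot \<phi> l = of_int z * qdot \<phi> l0"
proof -
  define H where "H = {m::int. \<exists>l\<in>G. of_int m = of_int N * qdot \<phi> l}"
  have H: "add_subgroup H"
  proof (rule add_subgroupI)
    show "0 \<in> H" using add_subgroup_zero[OF G] by (force simp: H_def)
  next
    fix a b assume "a \<in> H" "b \<in> H"
    then obtain la lb where "la \<in> G" "of_int a = of_int N * qdot \<phi> la"
      "lb \<in> G" "of_int b = of_int N * qdot \<phi> lb" unfolding H_def by blast
    thus "a + b \<in> H" unfolding H_def using add_subgroup_add[OF G]
      by (intro CollectI bexI[of _ "la + lb"]) (simp_all add: distrib_left)
  next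
    fix a assume "a \<in> H"
    then obtain la where "la \<in> G" "of_int a = of_int N * qdot \<phi> la" unfolding H_def by blast
    thus "- a \<in> H" unfolding H_def using add_subgroup_neg[OF G]
      by (intro CollectI bexI[of _ "- la"]) simp_all
  qed
  have in_H: "\<exists>m\<in>H. of_int m = of_int N * qdot \<phi> l" if l: "l \<in> G" for l
  proof -
    obtain m where "of_int N * qdot \<phi> l = of_int m" using N(2)[OF l] by (auto elim: Ints_cases)
    thus ?thesis using l unfolding H_def by (intro bexI[of _ m] CollectI bexI[of _ l]) simp_all
  qed
  obtain m where m: "m \<in> H" "of_int m = of_int N * qdot \<phi> e" using in_H[OF e(1)] by blast
  hence "m \<noteq> 0" using N(1) e(2) by auto
  then obtain g where g: "g > 0" "g \<in> H" "\<And>h. h \<in> H \<Longrightarrow> g dvd h"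
    using int_add_subgroup_principal[OF H m(1)] by blast
  obtain l0 where l0: "l0 \<in> G" "of_int g = of_int N * qdot \<phi> l0" using g(2) unfolding H_def by blast
  have "\<exists>z::int. qdot \<phi> l = of_int z * qdot \<phi> l0" if l: "l \<in> G" for l
  proof -
    obtain m where m: "m \<in> H" "of_int m = of_int N * qdot \<phi> l" using in_H[OF l] by blast
    obtain z where "m = g * z" using g(3)[OF m(1)] by (auto elim: dvdE)
    hence "of_int N * qdot \<phi> l = of_int g * of_int z" using m(2) by simp
    also have "\<dots> = of_int N * (of_int z * qdot \<phi> l0)" using l0(2) by (simp add: mult_ac)
    finally have "of_int N * qdot \<phi> l = of_int N * (of_int z * qdot \<phi> l0)" .
    thus ?thesis using N(1) by auto
  qed
  moreover have "qdot \<phi> l0 \<noteq> 0" using l0(2) g(1) by auto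
  ultimately show ?thesis using that l0(1) by blast
qed

text \<open>Correct \<open>w\<close> by a multiple of a form \<open>\<phi>\<close> vanishing on \<open>T\<close> with \<open>\<phi> e = 1\<close>, so that it
  vanishes at an \<open>l0\<close> whose \<open>\<phi>\<close>-value generates the cyclic group \<open>\<phi>(G \<inter> span (insert e T))\<close>;
  every \<open>l\<close> there differs from an integer multiple of \<open>l0\<close> by an element of \<open>span T\<close>.\<close>
lemma integral_qdot_extend_step:
  fixes G :: "(rat ^ 'n) set"
  assumes G: "add_subgroup G" and D: "D \<noteq> 0" "\<And>c j. c \<in> G \<Longrightarrow> of_int D * c $ j \<in> \<int>"
    and e: "e \<in> G" "e \<notin> vec.span T"
    and w: "\<And>l. l \<in> G \<Longrightarrow> l \<in> vec.span T \<Longrightarrow> qdot w l \<in> \<int>"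
  obtains w' where "\<And>u. u \<in> vec.span T \<Longrightarrow> qdot w' u = qdot w u"
    "\<And>l. l \<in> G \<Longrightarrow> l \<in> vec.span (insert e T) \<Longrightarrow> qdot w' l \<in> \<int>"
proof -
  obtain \<phi> where \<phi>: "qdot \<phi> e = 1" "\<And>u. u \<in> vec.span T \<Longrightarrow> qdot \<phi> u = 0"
    using qdot_separating[OF e(2)] by blast
  define G' where "G' = G \<inter> vec.span (insert e T)"
  have G': "add_subgroup G'" unfolding G'_def
    by (intro add_subgroup_Int G add_subgroupI vec.span_zero vec.span_add vec.span_neg)
  obtain N where N: "N \<noteq> 0" "\<And>l. l \<in> G \<Longrightarrow> of_int N * qdot \<phi> l \<in> \<int>"
    using qdot_bounded_denominator[OF D] by blast
  have "e \<in> G'" using e(1) by (simp add: G'_def vec.span_base)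
  then obtain l0 where l0: "l0 \<in> G'" "qdot \<phi> l0 \<noteq> 0"
    "\<And>l. l \<in> G' \<Longrightarrow> \<exists>z::int. qdot \<phi> l = of_int z * qdot \<phi> l0"
    using qdot_image_cyclic[OF G' N(1), of \<phi> e] N(2) \<phi>(1) by (auto simp: G'_def)
  define w' where "w' = w + (- qdot w l0 / qdot \<phi> l0) *s \<phi>"
  have agree: "qdot w' u = qdot w u" if "u \<in> vec.span T" for u
    using \<phi>(2)[OF that] by (simp add: w'_def)
  have w'l0: "qdot w' l0 = 0" using l0(2) by (simp add: w'_def)
  have "qdot w' l \<in> \<int>" if l: "l \<in> G'" for l
  proof -
    obtain z where z: "qdot \<phi> l = of_int z * qdot \<phi> l0" using l0(3)[OF l] by blast
    define \<mu> where "\<mu> = l - of_int z *s l0"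
    have "\<mu> \<in> G'"
      unfolding \<mu>_def using G' l l0(1) by (intro add_subgroup_diff vec_add_subgroup_of_int_smult)
    then obtain k where k: "\<mu> - k *s e \<in> vec.span T" by (auto simp: G'_def vec.span_insert)
    have "qdot \<phi> \<mu> = 0" using z by (simp add: \<mu>_def)
    moreover have "qdot \<phi> (\<mu> - k *s e) = 0" using \<phi>(2)[OF k] .
    ultimately have "k = 0" using \<phi>(1) by simp
    hence \<mu>T: "\<mu> \<in> vec.span T" using k by simp
    have "qdot w' l = qdot w' \<mu> + of_int z * qdot w' l0" by (simp add: \<mu>_def)
    also have "\<dots> = qdot w \<mu>" using agree[OF \<mu>T] w'l0 by simp
    also have "\<dots> \<in> \<int>" using w \<open>\<mu> \<in> G'\<close> \<mu>T by (simp add: G'_def)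
    finally show ?thesis .
  qed
  thus ?thesis using that[of w'] agree by (simp add: G'_def)
qed

lemma integral_qdot_extend:
  fixes G :: "(rat ^ 'n) set"
  assumes G: "add_subgroup G" "vec.span G = UNIV"
    and D: "D \<noteq> 0" "\<And>c j. c \<in> G \<Longrightarrow> of_int D * c $ j \<in> \<int>"
    and w: "\<And>l. l \<in> G \<Longrightarrow> l \<in> vec.span T \<Longrightarrow> qdot w l \<in> \<int>"
  obtains w' where "\<And>u. u \<in> vec.span T \<Longrightarrow> qdot w' u = qdot w u"
    "\<And>l. l \<in> G \<Longrightarrow> qdot w' l \<in> \<int>"
proof -
  have ext: "\<exists>w'. (\<forall>u\<in>vec.span T. qdot w' u = qdot w u) \<and>
      (\<forall>l\<in>G. l \<in> vec.span (T \<union> E) \<longrightarrow> qdot w' l \<in> \<int>)"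
    if "finite E" "E \<subseteq> G" for E
    using that
  proof (induction E rule: finite_induct)
    case empty
    thus ?case using w by auto
  next
    case (insert e E)
    then obtain w1 where w1: "\<forall>u\<in>vec.span T. qdot w1 u = qdot w u"
      "\<forall>l\<in>G. l \<in> vec.span (T \<union> E) \<longrightarrow> qdot w1 l \<in> \<int>" by blast
    have span_eq: "vec.span (T \<union> insert e E) = vec.span (insert e (T \<union> E))" by simp
    show ?case
    proof (cases "e \<in> vec.span (T \<union> E)")
      case True
      thus ?thesis using w1 vec.span_redundant[OF True] span_eq by auto
    next
      case False
      obtain w2 where w2: "\<And>u. u \<in> vec.span (T \<union> E) \<Longrightarrow> qdot w2 u = qdot w1 u"
        "\<And>l. l \<in> G \<Longrightarrow> l \<in> vec.span (insert e (T \<union> E)) \<Longrightarrow> qdot w2 l \<in> \<int>"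
        using integral_qdot_extend_step[OF G(1) D _ False, of w1] insert(4) w1(2) by auto
      have "vec.span T \<subseteq> vec.span (T \<union> E)" by (simp add: vec.span_mono)
      thus ?thesis using w1(1) w2 span_eq by (intro exI[of _ w2]) auto
    qed
  qed
  obtain E where E: "E \<subseteq> G" "vec.independent E" "G \<subseteq> vec.span E"
    using vec.maximal_independent_subset[of G] by blast
  have "finite E" using E(2) by (rule vec.finiteI_independent)
  then obtain w' where w': "\<forall>u\<in>vec.span T. qdot w' u = qdot w u"
    "\<forall>l\<in>G. l \<in> vec.span (T \<union> E) \<longrightarrow> qdot w' l \<in> \<int>"
    using ext E(1) by blast
  have "G \<subseteq> vec.span (T \<union> E)" using E(3) vec.span_mono[of E "T \<union> E"] by auto
  hence "vec.span (T \<union> E) = UNIV"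
    by (metis G(2) top.extremum_uniqueI vec.span_mono vec.span_span)
  thus ?thesis using that[of w'] w' by simp
qed

section \<open>Affine combinations\<close>

lemma affine_sum_mem:
  fixes f :: "'i \<Rightarrow> 'a::real_vector"
  assumes A: "affine A" and I: "finite I" "\<And>i. i \<in> I \<Longrightarrow> f i \<in> A" and u: "sum u I = 1"
  shows "(\<Sum>i\<in>I. u i *\<^sub>R f i) \<in> A"
proof -
  define U where "U = (\<lambda>y. \<Sum>i\<in>{i \<in> I. f i = y}. u i)"
  have "(\<Sum>i\<in>I. u i *\<^sub>R f i) = (\<Sum>y\<in>f ` I. \<Sum>i\<in>{i \<in> I. f i = y}. u i *\<^sub>R f i)"
    by (rule sum.image_gen[OF I(1)])
  also have "\<dots> = (\<Sum>y\<in>f ` I. U y *\<^sub>R y)"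
    unfolding U_def by (rule sum.cong[OF refl]) (simp add: scaleR_sum_left)
  finally have eq: "(\<Sum>i\<in>I. u i *\<^sub>R f i) = (\<Sum>y\<in>f ` I. U y *\<^sub>R y)" .
  have "sum U (f ` I) = sum u I" unfolding U_def by (rule sum.image_gen[OF I(1), symmetric])
  hence "sum U (f ` I) = 1" using u by simp
  hence "(\<Sum>y\<in>f ` I. U y *\<^sub>R y) \<in> affine hull (f ` I)"
    using affine_hull_finite[OF finite_imageI[OF I(1)]] by blast
  moreover have "affine hull (f ` I) \<subseteq> A" using A I(2) by (intro hull_minimal) auto
  ultimately show ?thesis using eq by auto
qed

lemma affine_weights_sum_zero:
  fixes f :: "'i \<Rightarrow> 'a::real_vector"
  assumes A: "affine A" "0 \<notin> A" and I: "finite I" "\<And>i. i \<in> I \<Longrightarrow> f i \<in> A"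
    and zero: "(\<Sum>i\<in>I. u i *\<^sub>R f i) = 0"
  shows "sum u I = 0"
proof (rule ccontr)
  assume s: "sum u I \<noteq> 0"
  have "(\<Sum>i\<in>I. (u i / sum u I) *\<^sub>R f i) \<in> A"
    using s by (intro affine_sum_mem[OF A(1) I]) (simp_all add: sum_divide_distrib[symmetric])
  moreover have "(\<Sum>i\<in>I. (u i / sum u I) *\<^sub>R f i) = (1 / sum u I) *\<^sub>R (\<Sum>i\<in>I. u i *\<^sub>R f i)"
    by (simp add: scaleR_sum_right divide_inverse mult.commute)
  ultimately show False using zero A(2) by simp
qed

lemma affine_weights_sum_one:
  fixes f :: "'i \<Rightarrow> 'a::real_vector"
  assumes A: "affine A" "0 \<notin> A" and I: "finite I" "\<And>i. i \<in> I \<Longrightarrow> f i \<in> A"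
    and x: "(\<Sum>i\<in>I. u i *\<^sub>R f i) \<in> A"
  shows "sum u I = 1"
proof -
  define x where "x = (\<Sum>i\<in>I. u i *\<^sub>R f i)"
  define f' where "f' = case_option x f"
  define u' where "u' = case_option (- 1) u"
  have inj: "inj_on Some I" by simp
  have "(\<Sum>j\<in>insert None (Some ` I). u' j *\<^sub>R f' j) = - x + (\<Sum>i\<in>I. u i *\<^sub>R f i)"
    using I(1) by (simp add: sum.reindex[OF inj] u'_def f'_def)
  hence "sum u' (insert None (Some ` I)) = 0"
    using x I by (intro affine_weights_sum_zero[OF A, of _ f']) (auto simp: x_def f'_def)
  thus ?thesis using I(1) by (simp add: sum.reindex[OF inj] u'_def)
qed

text \<open>Take \<open>w = 1\<close> on a basis of the preimage of \<open>A\<close>: the coefficients expressing a point of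
  \<open>A\<close> in terms of points of \<open>A\<close> add up to \<open>1\<close> because \<open>0 \<notin> A\<close>.\<close>
lemma qdot_eq_1_on_affine_preimage:
  fixes f :: "rat ^ 'n \<Rightarrow> 'a::real_vector"
  assumes f: "\<And>c d. f (c + d) = f c + f d" "\<And>q c. f (q *s c) = of_rat q *\<^sub>R f c"
    and A: "affine A" "0 \<notin> A"
  obtains w where "\<And>c. f c \<in> A \<Longrightarrow> qdot w c = 1"
proof -
  interpret additive f by unfold_locales (rule f(1))
  obtain S where S: "S \<subseteq> {c. f c \<in> A}" "vec.independent S" "{c. f c \<in> A} \<subseteq> vec.span S"
    using vec.maximal_independent_subset[of "{c. f c \<in> A}"] by blast
  have fin: "finite S" using S(2) by (rule vec.finiteI_independent)
  obtain w where w: "\<And>s. s \<in> S \<Longrightarrow> qdot w s = 1"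
    using qdot_interpolate[OF S(2), of "\<lambda>_. 1"] by blast
  have "qdot w c = 1" if c: "f c \<in> A" for c
  proof -
    obtain a where a: "c = (\<Sum>s\<in>S. a s *s s)" using S(3) c vec.span_finite[OF fin] by blast
    hence "f c = (\<Sum>s\<in>S. of_rat (a s) *\<^sub>R f s)" by (simp add: sum f(2))
    hence "(\<Sum>s\<in>S. of_rat (a s)) = (1::real)"
      using affine_weights_sum_one[OF A fin, of f "\<lambda>s. of_rat (a s)"] S(1) c by auto
    hence "sum a S = 1" by (metis of_rat_eq_1_iff of_rat_sum)
    thus ?thesis using a w by simp
  qed
  thus ?thesis using that by blast
qed

section \<open>Integer distance\<close>

lemma add_subgroup_span: "add_subgroup (span S)"
  by (intro add_subgroupI span_zero span_add span_neg)

lemma zspan_subset_add_subgroup: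
  assumes "add_subgroup L" "S \<subseteq> L"
  shows "zspan S \<subseteq> L"
  using assms unfolding zspan_def
  by (auto intro!: add_subgroup_sum real_add_subgroup_of_int_scaleR)

lemma zspan_extend:
  fixes c :: "'a::real_vector \<Rightarrow> real"
  assumes "finite U" "T \<subseteq> U"
  shows "(\<Sum>v\<in>T. c v *\<^sub>R v) = (\<Sum>v\<in>U. (if v \<in> T then c v else 0) *\<^sub>R v)"
proof -
  have "(\<Sum>v\<in>U. (if v \<in> T then c v else 0) *\<^sub>R v) = (\<Sum>v\<in>U. if v \<in> T then c v *\<^sub>R v else 0)"
    by (rule sum.cong) auto
  also have "\<dots> = (\<Sum>v\<in>U \<inter> T. c v *\<^sub>R v)" by (rule sum.inter_restrict[OF assms(1), symmetric])
  also have "U \<inter> T = T" using assms(2) by blast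
  finally show ?thesis by simp
qed

lemma add_subgroup_zspan: "add_subgroup (zspan S)"
proof (rule add_subgroupI)
  show "0 \<in> zspan S" unfolding zspan_def by (intro CollectI exI[of _ "{}"]) simp
next
  fix x y assume "x \<in> zspan S" "y \<in> zspan S"
  then obtain T c T' c' where T: "finite T" "T \<subseteq> S" "x = (\<Sum>v\<in>T. real_of_int (c v) *\<^sub>R v)"
    and T': "finite T'" "T' \<subseteq> S" "y = (\<Sum>v\<in>T'. real_of_int (c' v) *\<^sub>R v)"
    unfolding zspan_def by blast
  define d where "d = (\<lambda>v. (if v \<in> T then c v else 0) + (if v \<in> T' then c' v else 0))"
  have "x + y = (\<Sum>v\<in>T \<union> T'. (if v \<in> T then real_of_int (c v) else 0) *\<^sub>R v
      + (if v \<in> T' then real_of_int (c' v) else 0) *\<^sub>R v)"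
    using zspan_extend[of "T \<union> T'" T "\<lambda>v. real_of_int (c v)"]
      zspan_extend[of "T \<union> T'" T' "\<lambda>v. real_of_int (c' v)"] T T'
    by (simp add: sum.distrib)
  also have "\<dots> = (\<Sum>v\<in>T \<union> T'. real_of_int (d v) *\<^sub>R v)"
    by (rule sum.cong[OF refl]) (simp add: d_def scaleR_add_left[symmetric] del: scaleR_add_left)
  finally have "x + y = (\<Sum>v\<in>T \<union> T'. real_of_int (d v) *\<^sub>R v)" .
  thus "x + y \<in> zspan S" unfolding zspan_def using T T'
    by (intro CollectI exI[of _ "T \<union> T'"] exI[of _ d]) simp
next
  fix x assume "x \<in> zspan S"
  then obtain T c where T: "finite T" "T \<subseteq> S" "x = (\<Sum>v\<in>T. real_of_int (c v) *\<^sub>R v)"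
    unfolding zspan_def by blast
  hence "- x = (\<Sum>v\<in>T. real_of_int (- c v) *\<^sub>R v)" by (simp add: sum_negf)
  thus "- x \<in> zspan S" unfolding zspan_def using T
    by (intro CollectI exI[of _ T] exI[of _ "\<lambda>v. - c v"]) simp
qed

lemma linear_zspan_multiple:
  fixes F :: "'a::real_vector \<Rightarrow> real"
  assumes "linear F" "\<And>v. v \<in> S \<Longrightarrow> F v = a" "y \<in> zspan S"
  shows "\<exists>m::int. F y = of_int m * a"
proof -
  obtain T c where T: "finite T" "T \<subseteq> S" "y = (\<Sum>v\<in>T. real_of_int (c v) *\<^sub>R v)"
    using assms(3) unfolding zspan_def by blast
  have "F y = of_int (\<Sum>v\<in>T. c v) * a"
    using T assms(2) by (simp add: linear_sum[OF assms(1)] linear_scale[OF assms(1)]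
        sum_distrib_right subset_eq real_scaleR_def)
  thus ?thesis by blast
qed

text \<open>Translation by \<open>h\<close> permutes the finitely many cosets of \<open>Z\<close> in \<open>L\<close>; comparing the sums
  of a system of representatives and of its translate gives \<open>card (cosets) \<cdot> h \<in> Z\<close>.\<close>
lemma card_cosets_scaleR_mem:
  fixes Z L :: "'a::real_vector set"
  assumes Z: "add_subgroup Z" "Z \<subseteq> L"
    and L: "\<And>x y. x \<in> L \<Longrightarrow> y \<in> L \<Longrightarrow> x + y \<in> L"
    and fin: "finite ((\<lambda>x. (\<lambda>g. x + g) ` Z) ` L)" and h: "h \<in> L"
  shows "real (card ((\<lambda>x. (\<lambda>g. x + g) ` Z) ` L)) *\<^sub>R h \<in> Z"
proof -
  define coset where "coset = (\<lambda>x. (\<lambda>g. x + g) ` Z)"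
  define Cs where "Cs = coset ` L"
  define r where "r = (\<lambda>C::'a set. SOME y. y \<in> C)"
  have rC: "r C \<in> C" if C: "C \<in> Cs" for C
  proof -
    obtain x where "C = coset x" using C unfolding Cs_def by blast
    hence "x \<in> C" using add_subgroup_zero[OF Z(1)] by (force simp: coset_def)
    thus ?thesis unfolding r_def by (rule someI)
  qed
  define shift where "shift = (\<lambda>C::'a set. (\<lambda>g. h + g) ` C)"
  have shift_coset: "shift (coset x) = coset (h + x)" for x
    by (simp add: shift_def coset_def image_image add.assoc)
  have "shift ` Cs \<subseteq> Cs" using shift_coset h L by (auto simp: Cs_def)
  moreover have inj: "inj_on shift Cs"
  proof (rule inj_onI)
    fix C C' assume "shift C = shift C'"
    hence "(\<lambda>g. - h + g) ` shift C = (\<lambda>g. - h + g) ` shift C'" by simp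
    thus "C = C'" by (simp add: shift_def image_image)
  qed
  moreover have fCs: "finite Cs" using fin by (simp add: Cs_def coset_def)
  ultimately have "shift ` Cs = Cs" by (simp add: endo_inj_surj)
  hence "(\<Sum>C\<in>Cs. r (shift C)) = (\<Sum>C\<in>Cs. r C)"
    using sum.reindex[OF inj, of r] by (simp add: comp_def)
  hence sum_eq: "(\<Sum>C\<in>Cs. r (shift C) - h - r C) = - (real (card Cs) *\<^sub>R h)"
    by (simp add: sum_subtractf sum_constant_scaleR)
  have "r (shift C) - h - r C \<in> Z" if C: "C \<in> Cs" for C
  proof -
    obtain x where x: "C = coset x" using C by (auto simp: Cs_def)
    obtain z1 where z1: "z1 \<in> Z" "r C = x + z1" using rC[OF C] x by (auto simp: coset_def)
    have "shift C \<in> Cs" using \<open>shift ` Cs \<subseteq> Cs\<close> C by blast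
    then obtain z2 where z2: "z2 \<in> Z" "r (shift C) = h + x + z2"
      using rC x shift_coset by (force simp: coset_def add.assoc)
    have "r (shift C) - h - r C = z2 - z1" using z1 z2 by simp
    thus ?thesis using add_subgroup_diff[OF Z(1) z2(1) z1(1)] by simp
  qed
  hence "(\<Sum>C\<in>Cs. r (shift C) - h - r C) \<in> Z" by (rule add_subgroup_sum[OF Z(1)])
  hence "- (real (card Cs) *\<^sub>R h) \<in> Z" by (simp only: sum_eq)
  hence "real (card Cs) *\<^sub>R h \<in> Z" using add_subgroup_neg[OF Z(1)] by fastforce
  thus ?thesis by (simp add: Cs_def coset_def)
qed

text \<open>\<open>F\<close> takes values in \<open>k\<int>\<close> on the group generated by \<open>A \<inter> \<Lambda>\<close>, which contains \<open>k l\<close>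
  because its index in \<open>\<Lambda> \<inter> span A\<close> is \<open>k\<close>.\<close>
lemma int_distance_linear_form_integral:
  fixes \<Lambda> A :: "(real ^ 'n) set"
  assumes \<Lambda>: "add_subgroup \<Lambda>" and A: "0 \<notin> A"
    and k: "int_distance \<Lambda> A = k" "k > 0"
    and F: "linear F" "\<And>v. v \<in> A \<inter> \<Lambda> \<Longrightarrow> F v = real k"
    and l: "l \<in> \<Lambda>" "l \<in> span A"
  shows "F l \<in> \<int>"
proof -
  define Z where "Z = zspan (A \<inter> \<Lambda>)"
  define L where "L = \<Lambda> \<inter> span A"
  have L: "add_subgroup L" unfolding L_def by (intro add_subgroup_Int \<Lambda> add_subgroup_span)
  have "Z \<subseteq> L" unfolding Z_def using span_base[of _ A]
    by (intro zspan_subset_add_subgroup[OF L]) (auto simp: L_def)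
  moreover have card: "card ((\<lambda>x. (\<lambda>g. x + g) ` Z) ` L) = k"
    using k A by (simp add: int_distance_def Z_def L_def)
  ultimately have "real k *\<^sub>R l \<in> Z"
    using card_cosets_scaleR_mem[OF add_subgroup_zspan, of "A \<inter> \<Lambda>" L] l k(2)
      add_subgroup_add[OF L] card_ge_0_finite[of "(\<lambda>x. (\<lambda>g. x + g) ` Z) ` L"]
    by (simp add: Z_def L_def)
  then obtain m :: int where "F (real k *\<^sub>R l) = of_int m * real k"
    using linear_zspan_multiple[OF F(1)] F(2) unfolding Z_def by blast
  hence "F l = of_int m" using k(2) by (simp add: linear_scale[OF F(1)])
  thus ?thesis by simp
qed

lemma integer_plane_affine_hull:
  assumes "integer_plane \<Lambda> A" "A \<noteq> {}"
  shows "affine hull (A \<inter> \<Lambda>) = A"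
proof (rule affine_dim_equal)
  have A: "affine A" "aff_dim (A \<inter> \<Lambda>) = aff_dim A"
    using assms(1) unfolding integer_plane_def by auto
  thus "affine (affine hull (A \<inter> \<Lambda>))" "affine A" "aff_dim (affine hull (A \<inter> \<Lambda>)) = aff_dim A"
    by simp_all
  show "affine hull (A \<inter> \<Lambda>) \<subseteq> A" using A(1) by (intro hull_minimal) auto
  show "affine hull (A \<inter> \<Lambda>) \<noteq> {}"
    using A(2) assms(2) by (metis aff_dim_empty affine_hull_eq_empty)
qed

section \<open>Coordinates and trace in a number field\<close>

lemma trace_eq_if_similar:
  fixes M C D :: "'a::field ^ 'n ^ 'n"
  assumes "invertible M" "M ** C = D ** M"
  shows "Determinants.trace D = Determinants.trace C"
proof -
  obtain M' where M': "M ** M' = Finite_Cartesian_Product.mat 1" "M' ** M = Finite_Cartesian_Product.mat 1"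
    using assms(1) unfolding invertible_def by blast
  have "D = D ** (M ** M')" by (simp add: M'(1) matrix_mul_rid)
  also have "\<dots> = (M ** C) ** M'" by (simp only: matrix_mul_assoc assms(2))
  also have "\<dots> = M ** (C ** M')" by (simp only: matrix_mul_assoc)
  finally have D: "D = M ** (C ** M')" .
  have "Determinants.trace D = Determinants.trace ((C ** M') ** M)"
    unfolding D by (rule trace_mul_sym)
  also have "\<dots> = Determinants.trace C"
    by (simp add: matrix_mul_assoc[symmetric] M'(2) matrix_mul_rid)
  finally show ?thesis .
qed

lemma invertible_iff_inj_mult: "invertible (A :: 'a::field ^ 'n ^ 'n) \<longleftrightarrow> inj ((*v) A)"
  by (simp add: invertible_left_inverse matrix_left_invertible_injective)

lemma has_degree_basis_scale:
  assumes "has_degree_basis b" "\<And>j. r j \<noteq> 0"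
  shows "has_degree_basis (\<lambda>j. of_rat (r j) * b j)"
  unfolding has_degree_basis_def
proof
  fix x
  obtain c where c: "x = (\<Sum>i\<in>UNIV. of_rat (c i) * b i)"
    and unique: "\<And>c'. x = (\<Sum>i\<in>UNIV. of_rat (c' i) * b i) \<Longrightarrow> c' = c"
    using assms(1) unfolding has_degree_basis_def by metis
  have rescale: "(\<Sum>i\<in>UNIV. of_rat (c' i) * (of_rat (r i) * b i)) = (\<Sum>i\<in>UNIV. of_rat (c' i * r i) * b i)"
    for c' by (simp add: of_rat_mult mult.assoc)
  show "\<exists>!c. x = (\<Sum>i\<in>UNIV. of_rat (c i) * (of_rat (r i) * b i))"
  proof
    show "x = (\<Sum>i\<in>UNIV. of_rat (c i / r i) * (of_rat (r i) * b i))"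
      using c assms(2) by (simp add: rescale)
  next
    fix c' assume "x = (\<Sum>i\<in>UNIV. of_rat (c' i) * (of_rat (r i) * b i))"
    hence "(\<lambda>i. c' i * r i) = c" using unique by (simp add: rescale)
    thus "c' = (\<lambda>i. c i / r i)" using assms(2) by (auto simp: fun_eq_iff field_simps)
  qed
qed

locale number_field_basis =
  fixes \<tau> :: "'n::finite \<Rightarrow> 'k::field_char_0 \<Rightarrow> real" and b :: "'n \<Rightarrow> 'k"
  assumes embedding: "\<And>i. field_embedding (\<tau> i)"
    and inj_embeddings: "inj \<tau>"
    and basis: "has_degree_basis b"
begin

lemma field_hom_embedding: "field_hom (\<tau> i)"
  by (rule field_embedding_imp_field_hom[OF embedding])

lemma \<tau>_add [simp]: "\<tau> i (x + y) = \<tau> i x + \<tau> i y"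
  and \<tau>_mult [simp]: "\<tau> i (x * y) = \<tau> i x * \<tau> i y"
  and \<tau>_minus [simp]: "\<tau> i (- x) = - \<tau> i x"
  and \<tau>_zero [simp]: "\<tau> i 0 = 0"
  and \<tau>_one [simp]: "\<tau> i 1 = 1"
  and \<tau>_sum [simp]: "\<tau> i (\<Sum>j\<in>S. f j) = (\<Sum>j\<in>S. \<tau> i (f j))"
  and \<tau>_of_rat [simp]: "\<tau> i (of_rat q) = of_rat q"
proof -
  interpret field_hom "\<tau> i" by (rule field_hom_embedding)
  show "\<tau> i (x + y) = \<tau> i x + \<tau> i y" "\<tau> i (x * y) = \<tau> i x * \<tau> i y" "\<tau> i (- x) = - \<tau> i x"
    "\<tau> i 0 = 0" "\<tau> i 1 = 1" "\<tau> i (\<Sum>j\<in>S. f j) = (\<Sum>j\<in>S. \<tau> i (f j))"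
    "\<tau> i (of_rat q) = of_rat q"
    by (simp_all add: hom_distribs field_embedding_of_rat[OF embedding])
qed

definition coord :: "'k \<Rightarrow> 'n \<Rightarrow> rat" where
  "coord x = (THE c. x = (\<Sum>i\<in>UNIV. of_rat (c i) * b i))"

lemma coord: "x = (\<Sum>i\<in>UNIV. of_rat (coord x i) * b i)"
proof -
  have "\<exists>!c. x = (\<Sum>i\<in>UNIV. of_rat (c i) * b i)"
    using basis unfolding has_degree_basis_def by blast
  thus ?thesis unfolding coord_def by (rule theI')
qed

lemma coord_unique: "x = (\<Sum>i\<in>UNIV. of_rat (c i) * b i) \<Longrightarrow> coord x = c"
  using basis coord[of x] unfolding has_degree_basis_def by blast

lemma coord_add: "coord (x + y) = (\<lambda>i. coord x i + coord y i)"
  by (rule coord_unique, subst coord[of x], subst coord[of y])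
    (simp add: of_rat_add distrib_right sum.distrib)

lemma coord_scale: "coord (of_rat q * x) = (\<lambda>i. q * coord x i)"
  by (rule coord_unique, subst coord[of x]) (simp add: of_rat_mult sum_distrib_left mult.assoc)

lemma coord_zero: "coord 0 = (\<lambda>_. 0)"
  by (rule coord_unique) simp

lemma coord_basis: "coord (b j) = (\<lambda>i. if i = j then 1 else 0)"
proof (rule coord_unique)
  have "(\<Sum>i\<in>UNIV. of_rat (if i = j then 1 else 0) * b i) = (\<Sum>i\<in>UNIV. if i = j then b i else 0)"
    by (rule sum.cong) auto
  thus "b j = (\<Sum>i\<in>UNIV. of_rat (if i = j then 1 else 0) * b i)" by simp
qed

lemma \<tau>_coord: "\<tau> i x = (\<Sum>j\<in>UNIV. of_rat (coord x j) * \<tau> i (b j))"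
  by (subst coord[of x]) simp

text \<open>Dedekind's independence of characters: a shortest nontrivial relation among distinct
  embeddings would yield a shorter one after multiplying the argument by a suitable \<open>z\<close>.\<close>
lemma embeddings_linearly_independent:
  fixes c :: "'n \<Rightarrow> real"
  assumes "\<And>y. (\<Sum>i\<in>UNIV. c i * \<tau> i y) = 0"
  shows "c i = 0"
  using assms
proof (induction "card {i. c i \<noteq> 0}" arbitrary: c i rule: less_induct)
  case (less c)
  show ?case
  proof (rule ccontr)
    assume "c i \<noteq> 0"
    show False
    proof (cases "\<exists>j. j \<noteq> i \<and> c j \<noteq> 0")
      case False
      hence "(\<Sum>j\<in>UNIV. c j * \<tau> j 1) = (\<Sum>j\<in>UNIV. if j = i then c i else 0)"
        by (intro sum.cong) auto
      hence "(\<Sum>j\<in>UNIV. c j * \<tau> j 1) = c i" by simp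
      thus False using less.prems[of 1] \<open>c i \<noteq> 0\<close> by simp
    next
      case True
      then obtain j where j: "j \<noteq> i" "c j \<noteq> 0" by blast
      then obtain z where z: "\<tau> j z \<noteq> \<tau> i z" using inj_embeddings by (metis ext injD)
      define c' where "c' = (\<lambda>l. c l * (\<tau> l z - \<tau> i z))"
      have "(\<Sum>l\<in>UNIV. c' l * \<tau> l y) = 0" for y
      proof -
        have "(\<Sum>l\<in>UNIV. c' l * \<tau> l y)
            = (\<Sum>l\<in>UNIV. c l * \<tau> l (z * y)) - \<tau> i z * (\<Sum>l\<in>UNIV. c l * \<tau> l y)"
          by (simp add: c'_def algebra_simps sum_subtractf sum_distrib_left)
        thus ?thesis using less.prems[of "z * y"] less.prems[of y] by simp
      qed
      moreover have "card {l. c' l \<noteq> 0} < card {l. c l \<noteq> 0}"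
      proof -
        have "{l. c' l \<noteq> 0} \<subseteq> {l. c l \<noteq> 0} - {i}" by (auto simp: c'_def)
        hence "card {l. c' l \<noteq> 0} \<le> card ({l. c l \<noteq> 0} - {i})" by (intro card_mono) auto
        also have "\<dots> < card {l. c l \<noteq> 0}" using \<open>c i \<noteq> 0\<close> by (intro card_Diff1_less) auto
        finally show ?thesis .
      qed
      ultimately have "c' j = 0" using less.hyps by blast
      thus False using j z by (simp add: c'_def)
    qed
  qed
qed

definition embedding_matrix :: "real ^ 'n ^ 'n" where
  "embedding_matrix = (\<chi> i j. \<tau> i (b j))"

lemma embedding_matrix_invertible: "invertible embedding_matrix"
proof -
  have "c = 0" if c: "transpose embedding_matrix *v c = 0" for c
  proof -
    have cj: "(\<Sum>i\<in>UNIV. c $ i * \<tau> i (b j)) = 0" for j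
      using arg_cong[OF c, of "\<lambda>v. v $ j"]
      by (simp add: matrix_vector_mult_def transpose_def embedding_matrix_def mult.commute)
    have "(\<Sum>i\<in>UNIV. c $ i * \<tau> i y) = 0" for y
    proof -
      have "(\<Sum>i\<in>UNIV. c $ i * \<tau> i y)
          = (\<Sum>i\<in>UNIV. \<Sum>j\<in>UNIV. of_rat (coord y j) * (c $ i * \<tau> i (b j)))"
        by (subst \<tau>_coord) (simp add: sum_distrib_left mult_ac)
      also have "\<dots> = (\<Sum>j\<in>UNIV. of_rat (coord y j) * (\<Sum>i\<in>UNIV. c $ i * \<tau> i (b j)))"
        by (subst sum.swap) (simp add: sum_distrib_left)
      finally show ?thesis using cj by simp
    qed
    thus "c = 0"
      using embeddings_linearly_independent[of "($) c"]
      by (simp add: Finite_Cartesian_Product.vec_eq_iff)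
  qed
  hence "inj ((*v) (transpose embedding_matrix))"
    by (intro injI) (metis eq_iff_diff_eq_0 matrix_vector_mult_diff_distrib)
  hence "invertible (transpose embedding_matrix)" by (simp add: invertible_iff_inj_mult)
  hence "invertible (transpose (transpose embedding_matrix))" by (rule transpose_invertible)
  thus ?thesis by simp
qed

definition rat_trace :: "'k \<Rightarrow> rat" where
  "rat_trace x = (\<Sum>j\<in>UNIV. coord (x * b j) j)"

text \<open>Conjugating by the embedding matrix diagonalizes multiplication by \<open>x\<close>, whose trace in
  the basis \<open>b\<close> is \<open>rat_trace x\<close>.\<close>
lemma trace_eq_rat_trace: "trace \<tau> x = of_rat (rat_trace x)"
proof -
  define C :: "real ^ 'n ^ 'n" where "C = (\<chi> l j. of_rat (coord (x * b j) l))"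
  define D :: "real ^ 'n ^ 'n" where "D = (\<chi> i j. if i = j then \<tau> i x else 0)"
  have "(embedding_matrix ** C) $ i $ j = (D ** embedding_matrix) $ i $ j" for i j
  proof -
    have "(embedding_matrix ** C) $ i $ j = (\<Sum>l\<in>UNIV. \<tau> i (b l) * of_rat (coord (x * b j) l))"
      by (simp add: matrix_matrix_mult_def embedding_matrix_def C_def)
    also have "\<dots> = \<tau> i x * \<tau> i (b j)"
      by (subst \<tau>_mult[symmetric], subst \<tau>_coord[of i "x * b j"]) (simp add: mult.commute)
    also have "\<dots> = (D ** embedding_matrix) $ i $ j"
      by (simp add: matrix_matrix_mult_def embedding_matrix_def D_def if_distrib[of "\<lambda>a. a * _"]
          cong: if_cong)
    finally show ?thesis .
  qed
  hence "Determinants.trace D = Determinants.trace C"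
    by (intro trace_eq_if_similar[OF embedding_matrix_invertible])
      (simp add: Finite_Cartesian_Product.vec_eq_iff)
  thus ?thesis
    by (simp add: Defs.trace_def Determinants.trace_def C_def D_def rat_trace_def of_rat_sum)
qed

lemma rat_trace_add: "rat_trace (x + y) = rat_trace x + rat_trace y"
  by (simp add: rat_trace_def distrib_right coord_add sum.distrib)

lemma rat_trace_scale: "rat_trace (of_rat q * x) = q * rat_trace x"
  by (simp add: rat_trace_def coord_scale sum_distrib_left mult.assoc)

lemma rat_trace_zero: "rat_trace 0 = 0"
  by (simp add: rat_trace_def coord_zero)

lemma rat_trace_sum: "rat_trace (\<Sum>l\<in>S. f l) = (\<Sum>l\<in>S. rat_trace (f l))"
  by (induction S rule: infinite_finite_induct) (simp_all add: rat_trace_zero rat_trace_add)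

lemma rat_trace_one: "rat_trace 1 = of_nat CARD('n)"
  by (simp add: rat_trace_def coord_basis)

lemma rat_trace_algebraic_int:
  assumes "algebraic_int x"
  shows "rat_trace x \<in> \<int>"
proof -
  have "algebraic_int (trace \<tau> x)"
    unfolding Defs.trace_def using algebraic_int_field_embedding[OF embedding assms] by blast
  hence "(of_rat (rat_trace x) :: real) \<in> \<int>"
    by (intro rational_algebraic_int_is_int) (simp_all add: trace_eq_rat_trace)
  thus ?thesis by (simp add: of_rat_in_Ints_iff)
qed

definition from_coords :: "rat ^ 'n \<Rightarrow> 'k" where
  "from_coords c = (\<Sum>l\<in>UNIV. of_rat (c $ l) * b l)"

lemma coord_from_coords: "coord (from_coords c) = ($) c"
  unfolding from_coords_def by (rule coord_unique) simp

lemma from_coords_coord: "from_coords (\<chi> l. coord a l) = a"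
  unfolding from_coords_def by (simp add: coord[of a, symmetric])

lemma from_coords_add: "from_coords (c + d) = from_coords c + from_coords d"
  and from_coords_scale: "from_coords (q *s c) = of_rat q * from_coords c"
  and from_coords_neg: "from_coords (- c) = - from_coords c"
  and from_coords_zero: "from_coords 0 = 0"
  by (simp_all add: from_coords_def of_rat_add of_rat_mult of_rat_minus distrib_right
      sum.distrib sum_distrib_left mult.assoc sum_negf)

lemma from_coords_axis: "from_coords (axis j 1) = b j"
proof -
  have "from_coords (axis j 1) = (\<Sum>l\<in>UNIV. if l = j then b l else 0)"
    unfolding from_coords_def by (rule sum.cong) (auto simp: axis_def)
  thus ?thesis by simp
qed

lemma rat_trace_from_coords: "rat_trace (y * from_coords c) = (\<Sum>l\<in>UNIV. c $ l * rat_trace (y * b l))"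
proof -
  have "y * from_coords c = (\<Sum>l\<in>UNIV. of_rat (c $ l) * (y * b l))"
    by (simp add: from_coords_def sum_distrib_left mult_ac)
  thus ?thesis by (simp add: rat_trace_sum rat_trace_scale)
qed

lemma rat_trace_nondegenerate:
  assumes "\<And>j. rat_trace (y * b j) = 0"
  shows "y = 0"
proof (rule ccontr)
  assume "y \<noteq> 0"
  have "rat_trace (y * from_coords c) = 0" for c
    using assms by (simp add: rat_trace_from_coords)
  from this[of "\<chi> l. coord (inverse y) l"] have "rat_trace 1 = 0"
    using \<open>y \<noteq> 0\<close> by (simp add: from_coords_coord)
  thus False by (simp add: rat_trace_one)
qed

definition trace_matrix :: "rat ^ 'n ^ 'n" where
  "trace_matrix = (\<chi> j l. rat_trace (b j * b l))"

lemma trace_matrix_mult: "(trace_matrix *v c) $ j = rat_trace (b j * from_coords c)"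
  by (simp add: trace_matrix_def matrix_vector_mult_def rat_trace_from_coords mult.commute)

lemma trace_matrix_invertible: "invertible trace_matrix"
  unfolding invertible_iff_inj_mult
proof (rule injI)
  fix c d assume "trace_matrix *v c = trace_matrix *v d"
  hence "trace_matrix *v (c - d) = 0" by (simp add: matrix_vector_mult_diff_distrib)
  hence "rat_trace (from_coords (c - d) * b j) = 0" for j
    using trace_matrix_mult[of "c - d" j] by (simp add: mult.commute)
  hence "from_coords (c - d) = 0" by (rule rat_trace_nondegenerate)
  hence "coord (from_coords (c - d)) = coord 0" by simp
  hence "c - d = 0" by (simp add: coord_from_coords coord_zero Finite_Cartesian_Product.vec_eq_iff fun_eq_iff)
  thus "c = d" by simp
qed

lemma rat_trace_dual_element: "\<exists>d. \<forall>j. rat_trace (d * b j) = w $ j"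
proof -
  obtain T' where T': "trace_matrix ** T' = Finite_Cartesian_Product.mat 1"
    using trace_matrix_invertible unfolding invertible_def by blast
  have "trace_matrix *v (T' *v w) = w" by (simp add: matrix_vector_mul_assoc T')
  hence "rat_trace (from_coords (T' *v w) * b j) = w $ j" for j
    using trace_matrix_mult[of "T' *v w" j] by (simp add: mult.commute)
  thus ?thesis by blast
qed

lemma algebraic_int_multiple:
  fixes x :: 'k
  obtains N :: int where "N > 0" "algebraic_int (of_int N * x)"
proof -
  obtain N where N: "N > 0" "\<And>q. q \<in> (\<lambda>(j, l). coord (x * b j) l) ` UNIV \<Longrightarrow> of_int N * q \<in> \<int>"
    using rat_common_denominator[of "(\<lambda>(j, l). coord (x * b j) l) ` UNIV"] by auto
  have "\<forall>j l. \<exists>m::int. of_int N * coord (x * b j) l = of_int m"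
    using N(2) by (fastforce elim: Ints_cases)
  then obtain m where m: "\<And>j l. of_int N * coord (x * b j) l = of_int (m j l)" by metis
  obtain i0 where "b i0 \<noteq> 0"
    using coord[of 1] by (metis (no_types, lifting) mult_zero_right sum.neutral zero_neq_one)
  moreover have "of_int N * x * b j = (\<Sum>l\<in>UNIV. of_int (m j l) * b l)" for j
  proof -
    have "of_int N * x * b j = of_rat (of_int N) * (\<Sum>l\<in>UNIV. of_rat (coord (x * b j) l) * b l)"
      by (subst coord[symmetric]) (simp add: mult.assoc)
    also have "\<dots> = (\<Sum>l\<in>UNIV. of_rat (of_int N * coord (x * b j) l) * b l)"
      by (simp add: sum_distrib_left of_rat_mult mult.assoc)
    finally show ?thesis by (simp add: m)
  qed
  ultimately have "algebraic_int (of_int N * x)"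
    by (intro algebraic_int_of_integral_eigenvector[of UNIV i0 b _ m]) auto
  thus ?thesis using that N(1) by blast
qed

lemma integral_basis_exists: "\<exists>b'::'n \<Rightarrow> 'k. has_degree_basis b' \<and> (\<forall>j. algebraic_int (b' j))"
proof -
  have "\<forall>j. \<exists>N::int. N > 0 \<and> algebraic_int (of_int N * b j)"
    using algebraic_int_multiple by metis
  then obtain N where N: "\<And>j. N j > 0" "\<And>j. algebraic_int (of_int (N j) * b j)" by metis
  have "rat_of_int (N j) \<noteq> 0" for j using N(1)[of j] by simp
  hence "has_degree_basis (\<lambda>j. of_rat (of_int (N j)) * b j)"
    by (intro has_degree_basis_scale basis)
  thus ?thesis using N(2) by (intro exI[of _ "\<lambda>j. of_int (N j) * b j"]) simp
qed

lemma minkowski_add: "minkowski \<tau> (x + y) = minkowski \<tau> x + minkowski \<tau> y"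
  and minkowski_minus: "minkowski \<tau> (- x) = - minkowski \<tau> x"
  and minkowski_zero: "minkowski \<tau> 0 = 0"
  by (simp_all add: minkowski_def Finite_Cartesian_Product.vec_eq_iff)

lemma inner_minkowski: "minkowski \<tau> x \<bullet> minkowski \<tau> y = trace \<tau> (x * y)"
  by (simp add: minkowski_def inner_vec_def Defs.trace_def)

lemma add_subgroup_minkowski_lattice: "add_subgroup (minkowski_lattice \<tau>)"
  unfolding minkowski_lattice_def ring_of_integers_def
  by (intro add_subgroupI; force simp: minkowski_add minkowski_minus minkowski_zero
      simp flip: minkowski_add minkowski_minus minkowski_zero)

lemma codifferent_iff_dual_lattice:
  "\<delta> \<in> codifferent \<tau> \<longleftrightarrow> (\<forall>p\<in>minkowski_lattice \<tau>. minkowski \<tau> \<delta> \<bullet> p \<in> \<int>)"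
  by (simp add: codifferent_def minkowski_lattice_def inner_minkowski)

definition lattice_point :: "rat ^ 'n \<Rightarrow> real ^ 'n" where
  "lattice_point c = minkowski \<tau> (from_coords c)"

lemma lattice_point_add: "lattice_point (c + d) = lattice_point c + lattice_point d"
  and lattice_point_scale: "lattice_point (q *s c) = of_rat q *\<^sub>R lattice_point c"
  by (simp_all add: lattice_point_def from_coords_add from_coords_scale minkowski_add)
    (simp add: minkowski_def Finite_Cartesian_Product.vec_eq_iff)

lemma lattice_point_span:
  assumes "c \<in> vec.span X"
  shows "lattice_point c \<in> span (lattice_point ` X)"
  using assms
proof (induction rule: vec.span_induct_alt)
  case base
  thus ?case by (simp add: lattice_point_def from_coords_zero minkowski_zero span_zero)
next
  case (step q x y)
  thus ?case
    by (simp add: lattice_point_add lattice_point_scale span_add span_scale span_base)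
qed

lemma inner_lattice_point:
  assumes "\<And>j. rat_trace (\<delta> * b j) = w $ j"
  shows "minkowski \<tau> \<delta> \<bullet> lattice_point c = of_rat (qdot w c)"
  by (simp add: lattice_point_def inner_minkowski trace_eq_rat_trace rat_trace_from_coords assms
      qdot_def mult.commute)

end

section \<open>Integer planes lie in dual hyperplanes\<close>

locale integral_number_field_basis = number_field_basis \<tau> b
  for \<tau> :: "'n::finite \<Rightarrow> 'k::field_char_0 \<Rightarrow> real" and b +
  assumes integral_basis: "\<And>j. algebraic_int (b j)"
begin

definition int_coords :: "(rat ^ 'n) set" where
  "int_coords = {c. algebraic_int (from_coords c)}"

lemma minkowski_lattice_eq: "minkowski_lattice \<tau> = lattice_point ` int_coords"
proof -
  have R: "ring_of_integers = from_coords ` int_coords"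
  proof
    show "from_coords ` int_coords \<subseteq> ring_of_integers"
      by (auto simp: ring_of_integers_def int_coords_def)
  next
    show "ring_of_integers \<subseteq> from_coords ` int_coords"
    proof
      fix a :: 'k assume "a \<in> ring_of_integers"
      hence "(\<chi> l. coord a l) \<in> int_coords"
        by (simp add: int_coords_def from_coords_coord ring_of_integers_def)
      thus "a \<in> from_coords ` int_coords" using from_coords_coord[of a] by (metis image_eqI)
    qed
  qed
  show ?thesis unfolding minkowski_lattice_def lattice_point_def R image_image ..
qed

lemma add_subgroup_int_coords: "add_subgroup int_coords"
  unfolding int_coords_def
  by (intro add_subgroupI) (auto simp: from_coords_add from_coords_neg from_coords_zero)

lemma span_int_coords: "vec.span int_coords = UNIV"
proof -
  have "cart_basis \<subseteq> int_coords"
    by (auto simp: cart_basis_def int_coords_def from_coords_axis integral_basis)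
  hence "vec.span cart_basis \<subseteq> vec.span int_coords" by (rule vec.span_mono)
  thus ?thesis by auto
qed

text \<open>Coordinates of algebraic integers have bounded denominators: they are obtained from the
  integers \<open>rat_trace (b j * a)\<close> by the inverse of the trace matrix.\<close>
lemma int_coords_bounded_denominator:
  obtains D :: int where "D \<noteq> 0" "\<And>c j. c \<in> int_coords \<Longrightarrow> of_int D * c $ j \<in> \<int>"
proof -
  obtain T' where T': "T' ** trace_matrix = Finite_Cartesian_Product.mat 1"
    using trace_matrix_invertible unfolding invertible_def by blast
  obtain D where D: "D > 0" "\<And>q. q \<in> (\<lambda>(l, j). T' $ l $ j) ` UNIV \<Longrightarrow> of_int D * q \<in> \<int>"
    using rat_common_denominator[of "(\<lambda>(l, j). T' $ l $ j) ` UNIV"] by auto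
  have "of_int D * c $ l \<in> \<int>" if c: "c \<in> int_coords" for c l
  proof -
    have trace_int: "(trace_matrix *v c) $ j \<in> \<int>" for j
      using c by (auto simp: trace_matrix_mult int_coords_def integral_basis
          intro!: rat_trace_algebraic_int)
    have "c $ l = (T' *v (trace_matrix *v c)) $ l" by (simp add: matrix_vector_mul_assoc T')
    hence "of_int D * c $ l = (\<Sum>j\<in>UNIV. (of_int D * T' $ l $ j) * (trace_matrix *v c) $ j)"
      by (simp add: matrix_vector_mult_def sum_distrib_left mult.assoc)
    also have "\<dots> \<in> \<int>" using D(2) trace_int by (intro Ints_sum, rule Ints_mult) auto
    finally show ?thesis .
  qed
  thus ?thesis using that[of D] D(1) by simp
qed

lemma integral_form_on_integer_plane:
  assumes A: "integer_plane (minkowski_lattice \<tau>) A"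
    and k: "int_distance (minkowski_lattice \<tau>) A = k" "k > 0"
  obtains w where "\<And>c. c \<in> int_coords \<Longrightarrow> qdot w c \<in> \<int>"
    "\<And>c. lattice_point c \<in> A \<Longrightarrow> qdot w c = of_nat k"
proof -
  let ?\<Lambda> = "minkowski_lattice \<tau>" and ?P = "{c. lattice_point c \<in> A}"
  have "0 \<notin> A" using k by (auto simp: int_distance_def)
  moreover have "affine A" using A by (simp add: integer_plane_def)
  ultimately obtain w1 where w1: "\<And>c. lattice_point c \<in> A \<Longrightarrow> qdot w1 c = 1"
    using qdot_eq_1_on_affine_preimage[of lattice_point A] lattice_point_add lattice_point_scale
    by blast
  define w0 where "w0 = of_nat k *s w1"
  obtain \<delta>0 where \<delta>0: "\<And>j. rat_trace (\<delta>0 * b j) = w0 $ j"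
    using rat_trace_dual_element by blast
  have w0_int: "qdot w0 l \<in> \<int>" if l: "l \<in> int_coords" "l \<in> vec.span ?P" for l
  proof -
    have "lattice_point ` ?P \<subseteq> A" by blast
    hence "lattice_point l \<in> span A" using lattice_point_span[OF l(2)] span_mono by blast
    moreover have "lattice_point l \<in> ?\<Lambda>" using l(1) by (simp add: minkowski_lattice_eq)
    moreover have "minkowski \<tau> \<delta>0 \<bullet> v = real k" if "v \<in> A \<inter> ?\<Lambda>" for v
      using that w1 by (auto simp: minkowski_lattice_eq inner_lattice_point[OF \<delta>0] w0_def)
    ultimately have "minkowski \<tau> \<delta>0 \<bullet> lattice_point l \<in> \<int>"
      using int_distance_linear_form_integral[OF add_subgroup_minkowski_lattice \<open>0 \<notin> A\<close> k
          bounded_linear.linear[OF bounded_linear_inner_right]] by blast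
    thus ?thesis by (simp add: inner_lattice_point[OF \<delta>0] of_rat_in_Ints_iff)
  qed
  obtain D where D: "D \<noteq> 0" "\<And>c j. c \<in> int_coords \<Longrightarrow> of_int D * c $ j \<in> \<int>"
    using int_coords_bounded_denominator by blast
  obtain w where w: "\<And>u. u \<in> vec.span ?P \<Longrightarrow> qdot w u = qdot w0 u"
    "\<And>c. c \<in> int_coords \<Longrightarrow> qdot w c \<in> \<int>"
    using integral_qdot_extend[OF add_subgroup_int_coords span_int_coords D w0_int] by blast
  show ?thesis
    by (rule that[OF w(2)]) (simp_all add: w(1) vec.span_base w1 w0_def)
qed

theorem integer_plane_in_dual_hyperplane:
  assumes "integer_plane (minkowski_lattice \<tau>) A"
    and "int_distance (minkowski_lattice \<tau>) A = k" "k > 0"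
  shows "\<exists>\<delta>\<in>codifferent \<tau>. \<forall>x\<in>A. minkowski \<tau> \<delta> \<bullet> x = real k"
proof (cases "A = {}")
  case True
  have "0 \<in> codifferent \<tau>" by (simp add: codifferent_iff_dual_lattice minkowski_zero)
  thus ?thesis using True by blast
next
  case False
  obtain w where w: "\<And>c. c \<in> int_coords \<Longrightarrow> qdot w c \<in> \<int>"
    "\<And>c. lattice_point c \<in> A \<Longrightarrow> qdot w c = of_nat k"
    using integral_form_on_integer_plane[OF assms] by blast
  obtain \<delta> where \<delta>: "\<And>j. rat_trace (\<delta> * b j) = w $ j"
    using rat_trace_dual_element by blast
  have "\<delta> \<in> codifferent \<tau>"
    using w(1) by (auto simp: codifferent_iff_dual_lattice minkowski_lattice_eq
        inner_lattice_point[OF \<delta>] of_rat_in_Ints_iff)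
  moreover have "A \<inter> minkowski_lattice \<tau> \<subseteq> {x. minkowski \<tau> \<delta> \<bullet> x = real k}"
    using w(2) by (auto simp: minkowski_lattice_eq inner_lattice_point[OF \<delta>])
  hence "affine hull (A \<inter> minkowski_lattice \<tau>) \<subseteq> {x. minkowski \<tau> \<delta> \<bullet> x = real k}"
    by (intro hull_minimal) (simp_all add: affine_hyperplane)
  ultimately show ?thesis
    using integer_plane_affine_hull[OF assms(1) False] by blast
qed

end

theorem lemma2p1:
  fixes \<tau> :: "'n::finite \<Rightarrow> 'k::field_char_0 \<Rightarrow> real"
    and A :: "(real ^ 'n) set" and k :: nat
  assumes "number_field_degree TYPE('k) TYPE('n)"
    and "totally_real TYPE('k)"
    and "real_embeddings_enum \<tau>"
    and "integer_plane (minkowski_lattice \<tau>) A"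
    and "int_distance (minkowski_lattice \<tau>) A = k"
    and "k > 0"
  shows "\<exists>\<delta>\<in>codifferent \<tau>. \<forall>x\<in>A. (\<Sum>i\<in>UNIV. \<tau> i \<delta> * x $ i) = real k"
proof -
  obtain b :: "'n \<Rightarrow> 'k" where "has_degree_basis b"
    using assms(1) unfolding number_field_degree_def by blast
  moreover have emb: "\<And>i. field_embedding (\<tau> i)" "inj \<tau>"
    using assms(3) unfolding real_embeddings_enum_def by auto
  ultimately have "number_field_basis \<tau> b" by unfold_locales
  then obtain b' :: "'n \<Rightarrow> 'k" where "has_degree_basis b'" "\<And>j. algebraic_int (b' j)"
    using number_field_basis.integral_basis_exists by blast
  with emb interpret integral_number_field_basis \<tau> b' by unfold_locales
  show ?thesis
    using integer_plane_in_dual_hyperplane[OF assms(4-6)]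
    by (simp add: inner_vec_def minkowski_def)
qed

end
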